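(* Let $1\le k<n$ and $A\in\mathbb{H}_n$. Suppose there is a unique rank-$k$ orthogonal projection $P$ with $|\operatorname{tr}(AP)|=w_k(A)$, and $w_k(A)=\operatorname{tr}(AP)$. Suppose $\mathcal{C}\subseteq\mathbb{H}_n$ is a convex cone of real affine dimension at least $k^2+(n-k)^2$ with $A\in\mathcal{C}\subseteq\mathcal{P}^{\mathbb{H}}(A)$. Then $\mathcal{C}\subseteq S^{\mathbb{H}}(P)$, and so its real affine dimension equals $k^2+(n-k)^2$.
   Context: $\mathbb{H}_n$ is the real space of $n\times n$ Hermitian matrices. $w_k(A)=\max\{|\operatorname{tr}(AP)|: P=P^*=P^2,\operatorname{tr}P=k\}$. For $A,B\in\mathbb{H}_n$, $A\parallel B$ means $w_k(A+\mu B)=w_k(A)+w_k(B)$ for some $\mu\in\{1,-1\}$, and $\mathcal{P}^{\mathbb{H}}(A)=\{B\in\mathbb{H}_n:B\parallel A\}$. For a rank-$k$ orthogonal projection $P$, $S^{\mathbb{H}}(P)=\{B\in\mathbb{H}_n:\operatorname{tr}(BP)=w_k(B)\}$. A convex cone is closed under nonnegative real linear combinations; its real affine dimension is the real dimension of its real span. *)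

theory Defs
  imports "HOL-Analysis.Analysis"
begin

text \<open>n x n complex matrices are modelled as complex^'n^'n with n = CARD('n).\<close>

definition cadj :: "complex^'n^'n \<Rightarrow> complex^'n^'n" where
  "cadj M = (\<chi> i j. cnj (M $ j $ i))"

definition Herm :: "(complex^'n^'n) set" where
  "Herm = {A. cadj A = A}"

definition is_proj :: "nat \<Rightarrow> complex^'n^'n \<Rightarrow> bool" where
  "is_proj k P \<longleftrightarrow> P = cadj P \<and> P = P ** P \<and> trace P = of_nat k"

definition wk :: "nat \<Rightarrow> complex^'n^'n \<Rightarrow> real" where
  "wk k A = Sup {cmod (trace (A ** P)) | P. is_proj k P}"

definition par :: "nat \<Rightarrow> complex^'n^'n \<Rightarrow> complex^'n^'n \<Rightarrow> bool" where
  "par k A B \<longleftrightarrow> (\<exists>\<mu>\<in>{1::real, -1}. wk k (A + \<mu> *\<^sub>R B) = wk k A + wk k B)"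

definition PH :: "nat \<Rightarrow> complex^'n^'n \<Rightarrow> (complex^'n^'n) set" where
  "PH k A = {B \<in> Herm. par k B A}"

definition SH :: "nat \<Rightarrow> complex^'n^'n \<Rightarrow> (complex^'n^'n) set" where
  "SH k P = {B \<in> Herm. trace (B ** P) = complex_of_real (wk k B)}"

definition convex_cone_set :: "'a::real_vector set \<Rightarrow> bool" where
  "convex_cone_set C \<longleftrightarrow>
     (\<forall>x\<in>C. \<forall>y\<in>C. \<forall>a b::real. a \<ge> 0 \<longrightarrow> b \<ge> 0 \<longrightarrow> a *\<^sub>R x + b *\<^sub>R y \<in> C)"

end

theory Submission
  imports Defs
begin

text \<open>Put \<open>f(X) = tr(XP)\<close>. If \<open>X \<parallel> A\<close>, a rank-\<open>k\<close> projection attaining \<open>w\<^sub>k(X \<plusminus> A)\<close> attains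
  \<open>w\<^sub>k(A)\<close> too, hence is \<open>P\<close>; so \<open>|f| = w\<^sub>k\<close> on the cone \<open>\<C>\<close>. For \<open>1 \<le> k < n\<close>, \<open>w\<^sub>k\<close> vanishes
  only at \<open>0\<close> on Hermitian matrices, so the linear functional \<open>f\<close> vanishes only at \<open>0\<close> on \<open>\<C>\<close>.
  Were \<open>f(X) < 0\<close> for some \<open>X \<in> \<C>\<close>, a positive combination of \<open>A\<close> and \<open>X\<close> would be \<open>0\<close>, so
  \<open>-A \<in> \<C>\<close> and \<open>\<C>\<close> would lie on the line through \<open>A\<close>, contradicting \<open>dim \<C> \<ge> 2\<close>. Hence
  \<open>\<C> \<subseteq> S(P)\<close>. Finally, for \<open>X \<in> S(P)\<close> an orthonormal basis of \<open>range P\<close> maximises the Rayleigh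
  sum of \<open>X\<close>; rotating one basis vector slightly towards \<open>range (I - P)\<close> shows \<open>P X (I - P) = 0\<close>.
  So \<open>S(P)\<close> consists of block-diagonal matrices and has dimension at most \<open>k\<^sup>2 + (n - k)\<^sup>2\<close>.\<close>

section \<open>Complex inner products and outer products\<close>

definition cinner :: "complex^'n \<Rightarrow> complex^'n \<Rightarrow> complex" where
  "cinner x y = (\<Sum>i\<in>UNIV. cnj (x$i) * y$i)"

definition outer :: "complex^'n \<Rightarrow> complex^'n \<Rightarrow> complex^'n^'n" where
  "outer x y = (\<chi> i j. x$i * cnj (y$j))"

lemma cinner_zero_right [simp]: "cinner x 0 = 0"
  by (simp add: cinner_def)

lemma cnj_cinner: "cnj (cinner x y) = cinner y x"
  by (simp add: cinner_def mult_ac)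

lemma cinner_add_right: "cinner x (y + z) = cinner x y + cinner x z"
  by (simp add: cinner_def algebra_simps sum.distrib)

lemma cinner_add_left: "cinner (x + y) z = cinner x z + cinner y z"
  by (simp add: cinner_def algebra_simps sum.distrib)

lemma cinner_diff_right: "cinner x (y - z) = cinner x y - cinner x z"
  by (simp add: cinner_def algebra_simps sum_subtractf)

lemma cinner_diff_left: "cinner (x - y) z = cinner x z - cinner y z"
  by (simp add: cinner_def algebra_simps sum_subtractf)

lemma cinner_smult_right: "cinner x (c *s y) = c * cinner x y"
  by (simp add: cinner_def sum_distrib_left mult_ac)

lemma cinner_smult_left: "cinner (c *s x) y = cnj c * cinner x y"
  by (simp add: cinner_def sum_distrib_left mult_ac)

lemma cinner_axis_left: "cinner (axis l 1) y = y $ l"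
  unfolding cinner_def axis_def
  by (subst sum.cong[OF refl, where h="\<lambda>i. if i = l then y$i else 0"]) auto

lemma cinner_axis_right: "cinner y (axis l 1) = cnj (y $ l)"
  unfolding cinner_def axis_def
  by (subst sum.cong[OF refl, where h="\<lambda>i. if i = l then cnj (y$i) else 0"]) auto

lemma cinner_self: "cinner x x = complex_of_real (\<Sum>i\<in>UNIV. (cmod (x $ i))^2)"
  unfolding cinner_def of_real_sum
  by (intro sum.cong refl) (metis complex_norm_square mult.commute)

lemma cinner_self_pos: assumes "x \<noteq> 0" shows "Re (cinner x x) > 0"
proof -
  obtain i where "x $ i \<noteq> 0" using assms by (auto simp: vec_eq_iff)
  then have "0 < (cmod (x $ i))^2" by simp
  also have "\<dots> \<le> (\<Sum>i\<in>UNIV. (cmod (x $ i))^2)" by (rule member_le_sum) auto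
  finally show ?thesis by (simp add: cinner_self)
qed

definition unit_vec :: "complex^'n \<Rightarrow> complex^'n" where
  "unit_vec x = complex_of_real (1 / sqrt (Re (cinner x x))) *s x"

lemma cinner_unit_vec_self:
  assumes "x \<noteq> 0" shows "cinner (unit_vec x) (unit_vec x) = 1"
proof -
  define s where "s = Re (cinner x x)"
  have s: "s > 0" using cinner_self_pos[OF assms] s_def by simp
  have cx: "cinner x x = complex_of_real s" unfolding s_def by (simp add: cinner_self)
  have "(1 / sqrt s) * (1 / sqrt s) * s = 1"
    using s by (simp add: field_simps)
  moreover have "cinner (unit_vec x) (unit_vec x)
      = complex_of_real ((1 / sqrt s) * (1 / sqrt s) * s)"
    unfolding unit_vec_def s_def[symmetric] cinner_smult_left cinner_smult_right cx
    by (simp only: complex_cnj_complex_of_real of_real_mult mult.assoc Re_complex_of_real)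
  ultimately show ?thesis by simp
qed

lemma cinner_unit_vec_right: "cinner y x = 0 \<Longrightarrow> cinner y (unit_vec x) = 0"
  by (simp add: unit_vec_def cinner_smult_right)

lemma cadj_cadj [simp]: "cadj (cadj A) = A"
  by (simp add: vec_eq_iff cadj_def)

lemma cadj_mult: "cadj (A ** B) = cadj B ** cadj A"
  by (simp add: vec_eq_iff matrix_matrix_mult_def cadj_def mult_ac)

lemma cadj_add: "cadj (A + B) = cadj A + cadj B"
  by (simp add: vec_eq_iff cadj_def)

lemma cadj_diff: "cadj (A - B) = cadj A - cadj B"
  by (simp add: vec_eq_iff cadj_def)

lemma cadj_scaleR: "cadj (c *\<^sub>R A) = c *\<^sub>R cadj A"
  by (simp add: vec_eq_iff cadj_def)

lemma cadj_sum: "cadj (sum f S) = (\<Sum>x\<in>S. cadj (f x))"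
  by (induct S rule: infinite_finite_induct) (auto simp: cadj_add vec_eq_iff cadj_def)

lemma cadj_mat1 [simp]: "cadj (mat 1) = mat 1"
  by (simp add: vec_eq_iff cadj_def mat_def)

lemma cadj_outer: "cadj (outer x y) = outer y x"
  by (simp add: vec_eq_iff outer_def cadj_def)

lemma cinner_adj: "cinner x (M *v y) = cinner (cadj M *v x) y"
  by (simp add: cinner_def matrix_vector_mult_def cadj_def sum_distrib_left sum_distrib_right mult_ac,
   subst sum.swap, simp add: mult_ac)

lemma herm_cinner: assumes "X \<in> Herm" shows "cinner y (X *v x) = cnj (cinner x (X *v y))"
  using cinner_adj[of y X x] assms by (simp add: Herm_def cnj_cinner)

lemma matrix_add_rdistrib: "(B + C) ** A = B ** A + C ** (A::complex^'n^'n)"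
  by (simp add: vec_eq_iff matrix_matrix_mult_def sum.distrib algebra_simps)

lemma matrix_diff_rdistrib: "(A - B) ** M = A ** M - B ** (M::complex^'n^'n)"
  by (simp add: vec_eq_iff matrix_matrix_mult_def sum_subtractf algebra_simps)

lemma matrix_diff_ldistrib: "M ** (A - B) = M ** A - M ** (B::complex^'n^'n)"
  by (simp add: vec_eq_iff matrix_matrix_mult_def sum_subtractf algebra_simps)

lemma matrix_mult_sum_right: "(M::complex^'n^'n) ** sum f S = (\<Sum>a\<in>S. M ** (f a :: complex^'n^'n))"
  by (induct S rule: infinite_finite_induct) (auto simp: matrix_add_ldistrib)

lemma matrix_vector_sum_left: "(sum f S) *v x = (\<Sum>a\<in>S. (f a :: complex^'n^'n) *v x)"
  by (induct S rule: infinite_finite_induct) (auto simp: matrix_vector_mult_add_rdistrib)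

lemma matrix_vector_axis: "(W *v axis j 1) $ i = W $ i $ j"
  by (simp add: matrix_vector_mult_def axis_def if_distrib cong: if_cong)

lemma mult_outer: "M ** outer x y = outer (M *v x) y"
  by (simp add: vec_eq_iff matrix_matrix_mult_def outer_def matrix_vector_mult_def
      sum_distrib_right sum_distrib_left mult_ac)

lemma outer_mult_vec: "outer x y *v z = cinner y z *s x"
  by (simp add: vec_eq_iff outer_def matrix_vector_mult_def cinner_def
      sum_distrib_left sum_distrib_right mult_ac)

lemma outer_add_left: "outer (x + y) z = outer x z + outer y z"
  by (simp add: vec_eq_iff outer_def algebra_simps)

lemma outer_sum_left: "outer (sum f S) z = (\<Sum>a\<in>S. outer (f a) z)"
  by (induct S rule: infinite_finite_induct)
    (auto simp: outer_add_left, simp_all add: outer_def vec_eq_iff)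

lemma outer_scaleR_left: "outer (c *\<^sub>R x) z = c *\<^sub>R outer x z"
  by (simp add: vec_eq_iff outer_def)

lemma outer_smult_right: "outer x (c *s y) = outer (cnj c *s x) y"
  by (simp add: vec_eq_iff outer_def mult_ac)

lemma trace_sum: "trace (sum f S) = (\<Sum>a\<in>S. trace (f a :: complex^'n^'n))"
  by (induct S rule: infinite_finite_induct) (auto simp: trace_add, simp_all add: trace_def)

lemma trace_scaleR: "trace (c *\<^sub>R M) = complex_of_real c * trace (M::complex^'n^'n)"
  unfolding trace_def vector_scaleR_component by (simp add: sum_distrib_left scaleR_conv_of_real)

lemma trace_cadj: "trace (cadj M) = cnj (trace M)"
  by (simp add: trace_def cadj_def)

lemma trace_mult_outer: "trace (M ** outer x y) = cinner y (M *v x)"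
  by (simp add: trace_def matrix_matrix_mult_def outer_def cinner_def matrix_vector_mult_def
      sum_distrib_left sum_distrib_right mult_ac)

lemma trace_outer: "trace (outer x y) = cinner y x"
  by (simp add: trace_def outer_def cinner_def mult_ac)

lemma trace_herm_mult_real:
  assumes "X \<in> Herm" "cadj Q = Q"
  shows "trace (X ** Q) = complex_of_real (Re (trace (X ** Q)))"
proof -
  have "cnj (trace (X ** Q)) = trace (Q ** X)"
    using assms by (simp add: trace_cadj[symmetric] cadj_mult Herm_def)
  also have "\<dots> = trace (X ** Q)" by (rule trace_mul_sym)
  finally show ?thesis by (simp add: complex_eq_iff)
qed

section \<open>Orthonormal frames and the projections they span\<close>

definition orthonormal :: "nat \<Rightarrow> (nat \<Rightarrow> complex^'n) \<Rightarrow> bool" where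
  "orthonormal m u \<longleftrightarrow> (\<forall>a<m. \<forall>b<m. cinner (u a) (u b) = (if a = b then 1 else 0))"

definition proj_onto :: "nat \<Rightarrow> (nat \<Rightarrow> complex^'n) \<Rightarrow> complex^'n^'n" where
  "proj_onto m u = (\<Sum>a<m. outer (u a) (u a))"

lemma orthonormal_fun_upd:
  assumes "\<forall>b<k. \<forall>c<k. b \<noteq> a \<longrightarrow> c \<noteq> a \<longrightarrow> cinner (u b) (u c) = (if b = c then 1 else 0)"
    and "cinner w w = 1" and "\<forall>b<k. b \<noteq> a \<longrightarrow> cinner (u b) w = 0"
  shows "orthonormal k (u(a := w))"
  unfolding orthonormal_def
proof (intro allI impI)
  fix b c assume b: "b < k" and c: "c < k"
  have "cinner w (u c) = 0" if "c \<noteq> a"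
    using assms(3) c that cnj_cinner[of "u c" w] by auto
  then show "cinner ((u(a := w)) b) ((u(a := w)) c) = (if b = c then 1 else 0)"
    using assms b c by auto
qed

lemma orthonormal_replace:
  assumes "orthonormal k u" "cinner w w = 1" "\<forall>b<k. b \<noteq> a \<longrightarrow> cinner (u b) w = 0"
  shows "orthonormal k (u(a := w))"
  using assms by (intro orthonormal_fun_upd) (auto simp: orthonormal_def)

lemma orthonormal_extend:
  assumes "orthonormal j u" "cinner w w = 1" "\<forall>b<j. cinner (u b) w = 0"
  shows "orthonormal (Suc j) (u(j := w))"
  using assms by (intro orthonormal_fun_upd) (auto simp: orthonormal_def less_Suc_eq)

lemma trace_proj_onto: "trace (X ** proj_onto m u) = (\<Sum>a<m. cinner (u a) (X *v u a))"
  by (simp add: proj_onto_def matrix_mult_sum_right trace_sum trace_mult_outer)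

lemma proj_onto_mult_vec: "proj_onto m u *v x = (\<Sum>a<m. cinner (u a) x *s u a)"
  by (simp add: proj_onto_def matrix_vector_sum_left outer_mult_vec)

lemma proj_onto_fix: assumes "orthonormal m u" "b < m" shows "proj_onto m u *v u b = u b"
proof -
  have "proj_onto m u *v u b = (\<Sum>a<m. (if a = b then 1 else 0) *s u a)"
    unfolding proj_onto_mult_vec using assms by (intro sum.cong) (auto simp: orthonormal_def)
  also have "\<dots> = (\<Sum>a<m. if a = b then u b else 0)"
    by (intro sum.cong) auto
  finally show ?thesis using assms(2) by simp
qed

lemma proj_onto_perp: "\<forall>a<m. cinner (u a) v = 0 \<Longrightarrow> proj_onto m u *v v = 0"
  unfolding proj_onto_mult_vec by simp

lemma cadj_proj_onto: "cadj (proj_onto m u) = proj_onto m u"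
  by (simp add: proj_onto_def cadj_sum cadj_outer)

lemma proj_onto_absorb: "\<forall>a<m. Q *v u a = u a \<Longrightarrow> Q ** proj_onto m u = proj_onto m u"
  by (simp add: proj_onto_def matrix_mult_sum_right mult_outer)

lemma proj_onto_is_proj: assumes "orthonormal m u" shows "is_proj m (proj_onto m u)"
proof -
  have idem: "proj_onto m u ** proj_onto m u = proj_onto m u"
    using proj_onto_fix[OF assms] by (intro proj_onto_absorb) blast
  have "trace (proj_onto m u) = (\<Sum>b<m. cinner (u b) (u b))"
    by (simp add: proj_onto_def trace_sum trace_outer)
  also have "\<dots> = of_nat m" using assms by (simp add: orthonormal_def)
  finally show ?thesis using idem by (simp add: is_proj_def cadj_proj_onto)
qed

lemma proj_diag:
  assumes "is_proj k Q"
  shows "Q $ j $ j = complex_of_real (\<Sum>l\<in>UNIV. (cmod (Q $ l $ j))^2)"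
proof -
  have "Q $ j $ j = (cadj Q ** Q) $ j $ j"
    using assms unfolding is_proj_def by metis
  also have "\<dots> = (\<Sum>l\<in>UNIV. cnj (Q $ l $ j) * Q $ l $ j)"
    by (simp add: cadj_def matrix_matrix_mult_def)
  also have "\<dots> = (\<Sum>l\<in>UNIV. complex_of_real ((cmod (Q $ l $ j))^2))"
    by (intro sum.cong refl) (metis complex_norm_square mult.commute)
  finally show ?thesis by simp
qed

lemma proj_entry_le1: assumes "is_proj k Q" shows "cmod (Q $ i $ j) \<le> 1"
proof -
  define r where "r = (\<Sum>l\<in>UNIV. (cmod (Q $ l $ j))^2)"
  have le: "(cmod (Q $ l $ j))^2 \<le> r" for l
    unfolding r_def by (rule member_le_sum) auto
  have r0: "r \<ge> 0" unfolding r_def by (intro sum_nonneg) auto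
  have "Q $ j $ j = complex_of_real r" using proj_diag[OF assms] r_def by simp
  then have "r * r \<le> r" using le[of j] r0 by (simp add: power2_eq_square)
  then have "r \<le> 1" using r0 by (cases "r = 0") (auto simp: mult_le_cancel_left2)
  with le[of i] have "(cmod (Q $ i $ j))^2 \<le> 1" by linarith
  then show ?thesis by (simp add: power_le_one_iff abs_le_square_iff)
qed

lemma orthonormal_le_card: assumes "orthonormal j (u::nat \<Rightarrow> complex^'n)" shows "j \<le> CARD('n)"
proof -
  have R: "is_proj j (proj_onto j u)" by (rule proj_onto_is_proj[OF assms])
  then have "real j = Re (trace (proj_onto j u))" by (simp add: is_proj_def)
  also have "\<dots> = (\<Sum>i\<in>UNIV. Re (proj_onto j u $ i $ i))" by (simp add: trace_def)
  also have "\<dots> \<le> (\<Sum>i\<in>(UNIV::'n set). 1)"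
    by (intro sum_mono) (meson complex_Re_le_cmod order_trans proj_entry_le1[OF R])
  finally show ?thesis by simp
qed

text \<open>Gram--Schmidt step: the new frame vector is the normalised component of \<open>z\<close> orthogonal
  to \<open>u\<close>.\<close>

lemma proj_frame_extend:
  fixes Q :: "complex^'n^'n"
  assumes Q: "cadj Q = Q" "Q ** Q = Q" and u: "orthonormal j u" "\<forall>a<j. Q *v u a = u a"
    and z: "Q *v z = z" "proj_onto j u *v z \<noteq> z"
  shows "\<exists>u'. orthonormal (Suc j) u' \<and> (\<forall>a<Suc j. Q *v u' a = u' a)"
proof -
  define R where "R = proj_onto j u"
  define x where "x = z - R *v z"
  have xne: "x \<noteq> 0" using z(2) unfolding x_def R_def by simp
  have "Q ** R = R" unfolding R_def by (rule proj_onto_absorb[OF u(2)])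
  then have Qx: "Q *v x = x"
    by (simp add: x_def matrix_vector_mult_diff_distrib z(1) matrix_vector_mul_assoc)
  have ox: "cinner (u b) x = 0" if "b < j" for b
  proof -
    have "cinner (u b) (R *v z) = cinner (R *v u b) z"
      using cinner_adj[of "u b" R z] by (simp add: R_def cadj_proj_onto)
    then show ?thesis using proj_onto_fix[OF u(1) that] by (simp add: x_def R_def cinner_diff_right)
  qed
  have "orthonormal (Suc j) (u(j := unit_vec x))"
    using u(1) cinner_unit_vec_self[OF xne] ox cinner_unit_vec_right
    by (intro orthonormal_extend) auto
  moreover have "Q *v unit_vec x = unit_vec x"
    by (simp add: unit_vec_def vector_scalar_commute Qx)
  ultimately show ?thesis using u(2)
    by (intro exI[of _ "u(j := unit_vec x)"]) (auto simp: less_Suc_eq)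
qed

text \<open>A maximal orthonormal frame inside the range of \<open>Q\<close> spans it.\<close>

lemma proj_obtain_frame:
  fixes Q :: "complex^'n^'n"
  assumes Q: "is_proj m Q"
  obtains u where "orthonormal m u" "Q = proj_onto m u"
proof -
  define good where "good j \<longleftrightarrow> (\<exists>u. orthonormal j u \<and> (\<forall>a<j. Q *v u a = u a))" for j
  have bound: "good j \<Longrightarrow> j \<le> CARD('n)" for j
    unfolding good_def using orthonormal_le_card by blast
  define j where "j = (GREATEST j. good j)"
  have "good 0" by (auto simp: good_def orthonormal_def)
  then have "good j" unfolding j_def by (rule GreatestI_nat) (use bound in auto)
  then obtain u where u: "orthonormal j u" "\<forall>a<j. Q *v u a = u a" unfolding good_def by blast
  have max: "\<not> good (Suc j)"
    using Greatest_le_nat[of good "Suc j" "CARD('n)"] bound unfolding j_def by fastforce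
  define R where "R = proj_onto j u"
  have QH: "cadj Q = Q" and QQ: "Q ** Q = Q" using Q by (auto simp: is_proj_def)
  have "R *v (Q *v y) = Q *v y" for y
  proof (rule ccontr)
    assume "R *v (Q *v y) \<noteq> Q *v y"
    moreover have "Q *v (Q *v y) = Q *v y" by (simp add: matrix_vector_mul_assoc QQ)
    ultimately have "good (Suc j)"
      using proj_frame_extend[OF QH QQ u] unfolding good_def R_def by blast
    with max show False ..
  qed
  then have "R ** Q = Q" by (simp add: matrix_eq matrix_vector_mul_assoc[symmetric])
  moreover have "Q ** R = R" unfolding R_def by (rule proj_onto_absorb[OF u(2)])
  ultimately have QR: "Q = R"
    by (metis QH R_def cadj_mult cadj_proj_onto)
  have "of_nat m = trace Q" using Q by (simp add: is_proj_def)
  also have "\<dots> = of_nat j" using proj_onto_is_proj[OF u(1)] by (simp add: QR R_def is_proj_def)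
  finally show ?thesis using that u(1) QR R_def by simp
qed

lemma compl_is_proj:
  fixes P :: "complex^'n^'n"
  assumes "is_proj k P" "k \<le> CARD('n)"
  shows "is_proj (CARD('n) - k) (mat 1 - P)"
proof -
  have "cadj P = P" "P ** P = P" "trace P = of_nat k" using assms(1) by (auto simp: is_proj_def)
  then show ?thesis
    using assms(2) by (simp add: is_proj_def matrix_diff_ldistrib matrix_diff_rdistrib cadj_diff
        trace_sub trace_I of_nat_diff)
qed

section \<open>The \<open>k\<close>-numerical radius is attained\<close>

lemma trace_mult_proj_bound:
  assumes "is_proj k Q"
  shows "cmod (trace (A ** Q)) \<le> (\<Sum>i\<in>UNIV. \<Sum>l\<in>UNIV. cmod (A $ i $ l))"
proof -
  have "cmod (trace (A ** Q)) \<le> (\<Sum>i\<in>UNIV. cmod (\<Sum>l\<in>UNIV. A $ i $ l * Q $ l $ i))"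
    unfolding trace_def matrix_matrix_mult_def by (simp add: norm_sum)
  also have "\<dots> \<le> (\<Sum>i\<in>UNIV. \<Sum>l\<in>UNIV. cmod (A $ i $ l * Q $ l $ i))"
    by (intro sum_mono norm_sum)
  also have "\<dots> \<le> (\<Sum>i\<in>UNIV. \<Sum>l\<in>UNIV. cmod (A $ i $ l))"
    by (intro sum_mono) (auto simp: norm_mult intro!: mult_left_le[OF proj_entry_le1[OF assms]])
  finally show ?thesis .
qed

lemma wk_ge: "is_proj k Q \<Longrightarrow> cmod (trace (A ** Q)) \<le> wk k A"
  unfolding wk_def
  by (rule cSup_upper, blast, rule bdd_aboveI[of _ "\<Sum>i\<in>UNIV. \<Sum>l\<in>UNIV. cmod (A $ i $ l)"])
    (auto intro: trace_mult_proj_bound)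

lemma wk_nonneg: "is_proj k (P::complex^'n^'n) \<Longrightarrow> wk k (A::complex^'n^'n) \<ge> 0"
  using wk_ge[of k P A] by (meson norm_ge_zero order_trans)

lemma closed_proj: "closed {Q :: complex^'n^'n. is_proj k Q}"
proof -
  have "continuous_on UNIV (\<lambda>Q::complex^'n^'n. cadj Q)"
    unfolding cadj_def
    by (intro continuous_on_vec_lambda continuous_on_cnj continuous_on_component continuous_on_id)
  moreover have "continuous_on UNIV (\<lambda>Q::complex^'n^'n. Q ** Q)"
    unfolding matrix_matrix_mult_def
    by (intro continuous_on_vec_lambda continuous_on_sum continuous_on_mult continuous_on_component
        continuous_on_id)
  moreover have "continuous_on UNIV (\<lambda>Q::complex^'n^'n. trace Q)"
    unfolding trace_def by (intro continuous_on_sum continuous_on_component continuous_on_id)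
  ultimately have "closed {Q :: complex^'n^'n. Q = cadj Q}" "closed {Q :: complex^'n^'n. Q = Q ** Q}"
      "closed {Q :: complex^'n^'n. trace Q = of_nat k}"
    by (auto intro!: closed_Collect_eq intro: continuous_intros)
  moreover have "{Q :: complex^'n^'n. is_proj k Q} =
      {Q. Q = cadj Q} \<inter> {Q. Q = Q ** Q} \<inter> {Q. trace Q = of_nat k}"
    by (auto simp: is_proj_def)
  ultimately show ?thesis by (simp add: closed_Int)
qed

lemma norm_vec_le_sum: "norm (x::'a::real_normed_vector^'n) \<le> (\<Sum>i\<in>UNIV. norm (x $ i))"
  unfolding norm_vec_def by (rule L2_set_le_sum) auto

lemma bounded_proj: "bounded {Q :: complex^'n^'n. is_proj k Q}"
proof -
  have "norm Q \<le> real CARD('n) * real CARD('n)" if "is_proj k Q" for Q :: "complex^'n^'n"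
  proof -
    have "norm Q \<le> (\<Sum>i\<in>(UNIV::'n set). \<Sum>j\<in>(UNIV::'n set). norm (Q $ i $ j))"
      by (rule order_trans[OF norm_vec_le_sum]) (intro sum_mono norm_vec_le_sum)
    also have "\<dots> \<le> (\<Sum>i\<in>(UNIV::'n set). \<Sum>j\<in>(UNIV::'n set). 1)"
      by (intro sum_mono proj_entry_le1[OF that])
    finally show ?thesis by simp
  qed
  then show ?thesis unfolding bounded_iff by blast
qed

lemma wk_attained:
  fixes P B :: "complex^'n^'n"
  assumes "is_proj k P"
  obtains Q where "is_proj k Q" "cmod (trace (B ** Q)) = wk k B"
proof -
  have "compact {Q :: complex^'n^'n. is_proj k Q}"
    using closed_proj bounded_proj compact_eq_bounded_closed by blast
  moreover have "continuous_on {Q. is_proj k Q} (\<lambda>Q. cmod (trace (B ** Q)))"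
    unfolding trace_def matrix_matrix_mult_def vec_lambda_beta
    by (intro continuous_on_norm continuous_on_sum continuous_on_mult continuous_on_const
        continuous_on_component continuous_on_id)
  ultimately obtain Q where Q: "is_proj k Q"
    "\<And>Q'. is_proj k Q' \<Longrightarrow> cmod (trace (B ** Q')) \<le> cmod (trace (B ** Q))"
    using continuous_attains_sup[of "{Q. is_proj k Q}"] assms by blast
  have "wk k B = cmod (trace (B ** Q))"
    unfolding wk_def by (rule cSup_eq_maximum) (use Q in auto)
  then show ?thesis using Q that by auto
qed

section \<open>Frames maximising the Rayleigh sum\<close>

lemma cinner_quad_add_smult:
  fixes X :: "complex^'n^'n"
  assumes "X \<in> Herm"
  shows "cinner (p + z *s q) (X *v (p + z *s q)) =
     cinner p (X *v p) + z * cinner p (X *v q) + cnj z * cnj (cinner p (X *v q))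
       + cnj z * z * cinner q (X *v q)"
  using herm_cinner[OF assms, of q p]
  by (simp add: matrix_vector_right_distrib vector_scalar_commute cinner_add_left cinner_add_right
      cinner_smult_left cinner_smult_right algebra_simps)

lemma cinner_add_smult_self:
  assumes "cinner p q = 0"
  shows "cinner (p + z *s q) (p + z *s q) = cinner p p + cnj z * z * cinner q q"
  using assms cnj_cinner[of p q]
  by (simp add: cinner_add_left cinner_add_right cinner_smult_left cinner_smult_right algebra_simps)

text \<open>Moving the unit vector \<open>p\<close> towards \<open>q\<close> along \<open>p + t \<gamma>\<^sup>* q\<close>, with \<open>\<gamma> = \<langle>p, X q\<rangle>\<close>, the
  Rayleigh quotient becomes \<open>(\<alpha> + 2 t |\<gamma>|\<^sup>2 + t\<^sup>2 |\<gamma>|\<^sup>2 \<beta>) / (1 + t\<^sup>2 |\<gamma>|\<^sup>2)\<close>, which exceeds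
  \<open>\<alpha> = \<langle>p, X p\<rangle>\<close> as soon as \<open>t (\<alpha> - \<beta>) < 2\<close>.\<close>

lemma rayleigh_along_perp:
  fixes X :: "complex^'n^'n" and t :: real
  assumes XH: "X \<in> Herm" and p: "cinner p p = 1" and q: "cinner q q = 1" and pq: "cinner p q = 0"
  defines "w \<equiv> p + (complex_of_real t * cnj (cinner p (X *v q))) *s q"
  shows "cinner w w = complex_of_real (1 + t * t * (cmod (cinner p (X *v q)))^2)"
    and "Re (cinner w (X *v w)) = Re (cinner p (X *v p)) + 2 * t * (cmod (cinner p (X *v q)))^2
           + t * t * (cmod (cinner p (X *v q)))^2 * Re (cinner q (X *v q))"
proof -
  define \<gamma> where "\<gamma> = cinner p (X *v q)"
  define g where "g = (cmod \<gamma>)^2"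
  define z where "z = complex_of_real t * cnj \<gamma>"
  have gg: "cnj \<gamma> * \<gamma> = complex_of_real g" "\<gamma> * cnj \<gamma> = complex_of_real g"
    unfolding g_def by (metis complex_norm_square mult.commute)+
  have zz: "cnj z * z = complex_of_real (t * t * g)"
    unfolding z_def by (simp add: gg(2)[symmetric] mult_ac)
  have zg: "z * \<gamma> = complex_of_real (t * g)" "cnj z * cnj \<gamma> = complex_of_real (t * g)"
    unfolding z_def by (simp_all add: gg mult_ac)
  have w: "w = p + z *s q" unfolding w_def z_def \<gamma>_def ..
  show "cinner w w = complex_of_real (1 + t * t * (cmod (cinner p (X *v q)))^2)"
    unfolding w \<gamma>_def[symmetric] g_def[symmetric] by (simp add: cinner_add_smult_self[OF pq] p q zz)
  show "Re (cinner w (X *v w)) = Re (cinner p (X *v p)) + 2 * t * (cmod (cinner p (X *v q)))^2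
           + t * t * (cmod (cinner p (X *v q)))^2 * Re (cinner q (X *v q))"
    unfolding w cinner_quad_add_smult[OF XH] \<gamma>_def[symmetric] g_def[symmetric] zg zz by simp
qed

lemma rayleigh_quotient_increase:
  fixes \<alpha> \<beta> g t :: real
  assumes "g > 0" "t > 0" "t * (\<alpha> - \<beta>) < 2"
  shows "\<alpha> < (\<alpha> + 2 * t * g + t * t * g * \<beta>) / (1 + t * t * g)"
proof -
  have "t * g * (t * (\<alpha> - \<beta>)) < t * g * 2"
    using assms by (intro mult_strict_left_mono) auto
  then have "\<alpha> * (1 + t * t * g) < \<alpha> + 2 * t * g + t * t * g * \<beta>"
    by (simp add: algebra_simps)
  moreover have "1 + t * t * g > 0" using assms by (simp add: add_pos_nonneg)
  ultimately show ?thesis by (simp add: less_divide_eq)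
qed

lemma exists_unit_raising_rayleigh:
  fixes X :: "complex^'n^'n"
  assumes XH: "X \<in> Herm" and p: "cinner p p = 1" and q: "cinner q q = 1"
    and pq: "cinner p q = 0" and \<gamma>: "cinner p (X *v q) \<noteq> 0"
  obtains w where "cinner w w = 1" "\<And>y. cinner y p = 0 \<Longrightarrow> cinner y q = 0 \<Longrightarrow> cinner y w = 0"
    "Re (cinner p (X *v p)) < Re (cinner w (X *v w))"
proof -
  define \<alpha> where "\<alpha> = Re (cinner p (X *v p))"
  define \<beta> where "\<beta> = Re (cinner q (X *v q))"
  define g where "g = (cmod (cinner p (X *v q)))^2"
  define t where "t = 1 / (\<bar>\<alpha> - \<beta>\<bar> + 1)"
  define w where "w = p + (complex_of_real t * cnj (cinner p (X *v q))) *s q"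
  have g: "g > 0" using \<gamma> by (simp add: g_def)
  have t: "t > 0" unfolding t_def by (simp add: add_pos_nonneg)
  have "t * (\<alpha> - \<beta>) \<le> t * \<bar>\<alpha> - \<beta>\<bar>" using t by (intro mult_left_mono) auto
  also have "\<dots> < 1" unfolding t_def by (simp add: field_simps)
  finally have t1: "t * (\<alpha> - \<beta>) < 2" by simp
  define r where "r = 1 + t * t * g"
  have r: "r > 0" unfolding r_def using t g by (simp add: add_pos_nonneg)
  have ww: "cinner w w = complex_of_real r"
    unfolding w_def g_def r_def by (rule rayleigh_along_perp[OF XH p q pq])
  then have wne: "w \<noteq> 0" using r by (auto simp del: of_real_add of_real_mult)
  have "Re (cinner (unit_vec w) (X *v unit_vec w))
      = (1 / sqrt r) * (1 / sqrt r) * Re (cinner w (X *v w))"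
    by (simp add: unit_vec_def ww vector_scalar_commute cinner_smult_left cinner_smult_right)
  also have "\<dots> = (\<alpha> + 2 * t * g + t * t * g * \<beta>) / r"
    using rayleigh_along_perp(2)[OF XH p q pq, of t] r
    by (simp add: w_def \<alpha>_def \<beta>_def g_def field_simps)
  finally have "\<alpha> < Re (cinner (unit_vec w) (X *v unit_vec w))"
    using rayleigh_quotient_increase[OF g t t1] by (simp add: r_def)
  moreover have "cinner y (unit_vec w) = 0" if "cinner y p = 0" "cinner y q = 0" for y
    using that by (intro cinner_unit_vec_right) (simp add: w_def cinner_add_right cinner_smult_right)
  ultimately show ?thesis
    using that[of "unit_vec w"] cinner_unit_vec_self[OF wne] unfolding \<alpha>_def by blast
qed

lemma sum_fun_upd_at:
  fixes f :: "'a \<Rightarrow> 'b::ab_group_add"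
  assumes "finite S" "a \<in> S"
  shows "(\<Sum>b\<in>S. f ((u(a := w)) b)) = (\<Sum>b\<in>S. f (u b)) - f (u a) + f w"
proof -
  have "(\<Sum>b\<in>S - {a}. f ((u(a := w)) b)) = (\<Sum>b\<in>S - {a}. f (u b))"
    by (intro sum.cong) auto
  then show ?thesis
    using sum.remove[OF assms, of "\<lambda>b. f ((u(a := w)) b)"] sum.remove[OF assms, of "\<lambda>b. f (u b)"]
    by simp
qed

text \<open>First-order optimality condition for maximising \<open>Re tr (X P)\<close> over rank-\<open>k\<close> projections.\<close>

lemma maximal_frame_cross_zero:
  fixes X :: "complex^'n^'n"
  assumes XH: "X \<in> Herm" and u: "orthonormal k u" and a: "a < k"
    and v: "cinner v v = 1" "\<forall>b<k. cinner (u b) v = 0"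
    and max: "\<And>u'. orthonormal k u' \<Longrightarrow>
        Re (trace (X ** proj_onto k u')) \<le> Re (trace (X ** proj_onto k u))"
  shows "cinner (u a) (X *v v) = 0"
proof (rule ccontr)
  assume "cinner (u a) (X *v v) \<noteq> 0"
  moreover have "cinner (u a) (u a) = 1" using u a by (simp add: orthonormal_def)
  ultimately obtain w where w: "cinner w w = 1"
      "\<And>y. cinner y (u a) = 0 \<Longrightarrow> cinner y v = 0 \<Longrightarrow> cinner y w = 0"
      "Re (cinner (u a) (X *v u a)) < Re (cinner w (X *v w))"
    using exists_unit_raising_rayleigh[OF XH _ v(1)] v(2) a by blast
  have "cinner (u b) w = 0" if "b < k" "b \<noteq> a" for b
    using u v(2) a that by (intro w(2)) (auto simp: orthonormal_def)
  then have "orthonormal k (u(a := w))" using u w(1) by (intro orthonormal_replace) auto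
  then have "Re (trace (X ** proj_onto k (u(a := w)))) \<le> Re (trace (X ** proj_onto k u))"
    by (rule max)
  moreover have "trace (X ** proj_onto k (u(a := w)))
      = trace (X ** proj_onto k u) - cinner (u a) (X *v u a) + cinner w (X *v w)"
    unfolding trace_proj_onto using a
    by (intro sum_fun_upd_at[where f="\<lambda>x. cinner x (X *v x)"]) auto
  ultimately show False using w(3) by simp
qed

section \<open>\<open>w\<^sub>k\<close> vanishes only at zero\<close>

lemma exists_inj_avoiding_pair:
  fixes i j :: 'n
  assumes "k < CARD('n)" "i \<noteq> j"
  obtains g where "inj_on g {..<k-1}" "g ` {..<k-1} \<subseteq> UNIV - {i,j}"
proof -
  have "k - 1 \<le> card (UNIV - {i,j})" using assms by (simp add: card_Diff_subset)
  then obtain T where T: "T \<subseteq> UNIV - {i,j}" "card T = k - 1" "finite T"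
    by (rule obtain_subset_with_card_n)
  obtain h where "bij_betw h {0..<card T} T" using ex_bij_betw_nat_finite[OF T(3)] by blast
  then show ?thesis
    using that[of h] T by (auto simp: bij_betw_def lessThan_atLeast0)
qed

lemma exists_other_index:
  fixes i :: 'n assumes "2 \<le> CARD('n)" obtains j where "j \<noteq> i"
proof -
  have "\<not> (UNIV::'n set) \<subseteq> {i}" using assms card_mono[of "{i}" "UNIV::'n set"] by auto
  then show ?thesis using that by blast
qed

definition axis_frame :: "complex^'n \<Rightarrow> (nat \<Rightarrow> 'n) \<Rightarrow> nat \<Rightarrow> complex^'n" where
  "axis_frame x g = (\<lambda>a. if a = 0 then x else axis (g (a - 1)) 1)"

lemma axis_comp: "axis l c $ m = (if m = l then c else 0)"
  by (simp add: axis_def)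

lemma axis_frame_orthonormal:
  assumes g: "inj_on g {..<k-1}" "g ` {..<k-1} \<subseteq> UNIV - {i,j}"
    and x: "cinner x x = 1" "\<forall>l. l \<noteq> i \<and> l \<noteq> j \<longrightarrow> x $ l = 0"
  shows "orthonormal k (axis_frame x g)"
  unfolding orthonormal_def
proof (intro allI impI)
  fix a b assume a: "a < k" and b: "b < k"
  have gx: "x $ g m = 0" if "m < k - 1" for m using g(2) x(2) that by auto
  show "cinner (axis_frame x g a) (axis_frame x g b) = (if a = b then 1 else 0)"
  proof (cases "a = 0"; cases "b = 0")
    assume "a = 0" "b = 0" then show ?thesis using x by (simp add: axis_frame_def)
  next
    assume "a = 0" "b \<noteq> 0" then show ?thesis using gx[of "b - 1"] b
      by (simp add: axis_frame_def cinner_axis_right)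
  next
    assume "a \<noteq> 0" "b = 0" then show ?thesis using gx[of "a - 1"] a
      by (simp add: axis_frame_def cinner_axis_left)
  next
    assume "a \<noteq> 0" "b \<noteq> 0"
    then have "g (a - 1) = g (b - 1) \<longleftrightarrow> a = b" using g(1) a b by (auto dest: inj_onD)
    then show ?thesis using \<open>a \<noteq> 0\<close> \<open>b \<noteq> 0\<close>
      by (simp add: axis_frame_def cinner_axis_left axis_comp)
  qed
qed

lemma axis_frame_perp:
  assumes g: "g ` {..<k-1} \<subseteq> UNIV - {i,j}"
    and v: "cinner x v = 0" "\<forall>l. l \<noteq> i \<and> l \<noteq> j \<longrightarrow> v $ l = 0"
  shows "\<forall>b<k. cinner (axis_frame x g b) v = 0"
proof (intro allI impI)
  fix b assume "b < k"
  then have "b \<noteq> 0 \<Longrightarrow> g (b - 1) \<in> g ` {..<k-1}" by auto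
  then have "b \<noteq> 0 \<Longrightarrow> g (b - 1) \<noteq> i \<and> g (b - 1) \<noteq> j" using g by blast
  then show "cinner (axis_frame x g b) v = 0" using v
    by (auto simp: axis_frame_def cinner_axis_left)
qed

lemma sum_axis_frame:
  assumes "1 \<le> k"
  shows "(\<Sum>a<k. F (axis_frame x g a)) = F x + (\<Sum>m<k-1. F (axis (g m) 1))"
proof -
  obtain k' where k: "k = Suc k'" using assms by (cases k) auto
  show ?thesis
    unfolding k lessThan_atLeast0 sum.atLeast0_lessThan_Suc_shift by (simp add: axis_frame_def)
qed

lemma exists_distinct_proj:
  assumes k1: "1 \<le> k" and kn: "k < CARD('n)"
  obtains Q1 Q2 :: "complex^'n^'n" where "is_proj k Q1" "is_proj k Q2" "Q1 \<noteq> Q2"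
proof -
  fix i :: 'n
  have "2 \<le> CARD('n)" using k1 kn by simp
  then obtain j where ij: "i \<noteq> j" using exists_other_index[of i] by metis
  obtain g where g: "inj_on g {..<k-1}" "g ` {..<k-1} \<subseteq> UNIV - {i,j}"
    using exists_inj_avoiding_pair[OF kn ij] by blast
  have o1: "orthonormal k (axis_frame (axis i 1) g)"
    by (rule axis_frame_orthonormal[OF g]) (auto simp: cinner_axis_left axis_comp)
  have o2: "orthonormal k (axis_frame (axis j 1) g)"
    by (rule axis_frame_orthonormal[OF g]) (auto simp: cinner_axis_left axis_comp)
  have "\<forall>b<k. cinner (axis_frame (axis j 1) g b) (axis i 1) = 0"
    by (rule axis_frame_perp[OF g(2)]) (use ij in \<open>auto simp: cinner_axis_left axis_comp\<close>)
  then have "proj_onto k (axis_frame (axis j 1) g) *v axis i 1 = 0" by (rule proj_onto_perp)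
  moreover have "proj_onto k (axis_frame (axis i 1) g) *v axis i 1 = axis i 1"
    using proj_onto_fix[OF o1, of 0] k1 by (simp add: axis_frame_def)
  ultimately have "proj_onto k (axis_frame (axis i 1) g) \<noteq> proj_onto k (axis_frame (axis j 1) g)"
    by (metis axis_eq_0_iff zero_neq_one)
  then show ?thesis using that proj_onto_is_proj[OF o1] proj_onto_is_proj[OF o2] by blast
qed

text \<open>For the rest of this section the Rayleigh sums of the Hermitian matrix \<open>W\<close> vanish on every
  orthonormal \<open>k\<close>-frame; every frame is then maximising, so \<open>maximal_frame_cross_zero\<close> applies
  to all of them.\<close>

lemma rayleigh_vanishing_offdiag:
  fixes W :: "complex^'n^'n"
  assumes WH: "W \<in> Herm" and W0: "\<And>u. orthonormal k u \<Longrightarrow> trace (W ** proj_onto k u) = 0"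
    and k1: "1 \<le> k" and kn: "k < CARD('n)" and ij: "i \<noteq> j"
  shows "W $ i $ j = 0"
proof -
  obtain g where g: "inj_on g {..<k-1}" "g ` {..<k-1} \<subseteq> UNIV - {i,j}"
    using exists_inj_avoiding_pair[OF kn ij] by blast
  have u: "orthonormal k (axis_frame (axis i 1) g)"
    by (rule axis_frame_orthonormal[OF g]) (auto simp: cinner_axis_left axis_comp)
  have "cinner (axis_frame (axis i 1) g 0) (W *v axis j 1) = 0"
  proof (rule maximal_frame_cross_zero[OF WH u])
    show "\<forall>b<k. cinner (axis_frame (axis i 1) g b) (axis j 1) = 0"
      by (rule axis_frame_perp[OF g(2)]) (use ij in \<open>auto simp: cinner_axis_left axis_comp\<close>)
  qed (use k1 W0 u in \<open>auto simp: cinner_axis_left\<close>)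
  then show ?thesis by (simp add: axis_frame_def cinner_axis_left matrix_vector_axis)
qed

lemma rayleigh_vanishing_diag_eq:
  fixes W :: "complex^'n^'n"
  assumes WH: "W \<in> Herm" and W0: "\<And>u. orthonormal k u \<Longrightarrow> trace (W ** proj_onto k u) = 0"
    and k1: "1 \<le> k" and kn: "k < CARD('n)" and ij: "i \<noteq> j"
  shows "W $ i $ i = W $ j $ j"
proof -
  obtain g where g: "inj_on g {..<k-1}" "g ` {..<k-1} \<subseteq> UNIV - {i,j}"
    using exists_inj_avoiding_pair[OF kn ij] by blast
  \<comment> \<open>Frame vector \<open>(e\<^sub>i + e\<^sub>j)/\<surd>2\<close>, test vector \<open>(e\<^sub>i - e\<^sub>j)/\<surd>2\<close>: their cross term is
    \<open>(W\<^sub>i\<^sub>i - W\<^sub>j\<^sub>j)/2\<close> once the off-diagonal entries vanish.\<close>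
  define c where "c = complex_of_real (1 / sqrt 2)"
  have "cnj c * c = complex_of_real (1 / sqrt 2 * (1 / sqrt 2))"
    unfolding c_def by (simp only: complex_cnj_complex_of_real of_real_mult)
  then have "cnj c * c = 1/2" by simp
  then have half: "cinner (c *s y) (c *s z) = cinner y z / 2" for y z
    by (simp add: cinner_smult_left cinner_smult_right mult.assoc[symmetric])
      (simp add: mult.assoc mult.commute)
  define e where "e = axis i 1 + axis j (1::complex)"
  define d where "d = axis i 1 - axis j (1::complex)"
  have ee: "cinner e e = 2" and dd: "cinner d d = 2" and ed: "cinner e d = 0"
    using ij by (simp_all add: e_def d_def cinner_add_left cinner_diff_left cinner_axis_left axis_comp)
  have u: "orthonormal k (axis_frame (c *s e) g)"
  proof (rule axis_frame_orthonormal[OF g])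
    show "cinner (c *s e) (c *s e) = 1" by (simp add: half ee)
  qed (simp add: e_def axis_comp)
  have "cinner (axis_frame (c *s e) g 0) (W *v (c *s d)) = 0"
  proof (rule maximal_frame_cross_zero[OF WH u])
    show "cinner (c *s d) (c *s d) = 1" by (simp add: half dd)
    show "\<forall>b<k. cinner (axis_frame (c *s e) g b) (c *s d) = 0"
      by (rule axis_frame_perp[OF g(2)]) (simp add: half ed, simp add: d_def axis_comp)
  qed (use k1 W0 u in auto)
  then have "cinner e (W *v d) = 0" by (simp add: axis_frame_def vector_scalar_commute half)
  moreover have "cinner e (W *v d) = W $ i $ i - W $ i $ j + (W $ j $ i - W $ j $ j)"
    by (simp add: e_def d_def cinner_add_left cinner_axis_left matrix_vector_mult_diff_distrib
        matrix_vector_axis)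
  ultimately show ?thesis
    using rayleigh_vanishing_offdiag[OF WH W0 k1 kn, of i j]
      rayleigh_vanishing_offdiag[OF WH W0 k1 kn, of j i] ij
    by simp
qed

lemma rayleigh_vanishing_imp_zero:
  fixes W :: "complex^'n^'n"
  assumes WH: "W \<in> Herm" and W0: "\<And>u. orthonormal k u \<Longrightarrow> trace (W ** proj_onto k u) = 0"
    and k1: "1 \<le> k" and kn: "k < CARD('n)"
  shows "W = 0"
proof -
  fix i :: 'n
  have "2 \<le> CARD('n)" using k1 kn by simp
  then obtain j where ij: "j \<noteq> i" by (rule exists_other_index)
  have diag: "W $ l $ l = W $ i $ i" for l
    using rayleigh_vanishing_diag_eq[OF WH W0 k1 kn] by (cases "l = i") auto
  obtain g where g: "inj_on g {..<k-1}" "g ` {..<k-1} \<subseteq> UNIV - {i,j}"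
    using exists_inj_avoiding_pair[OF kn ij[symmetric]] by blast
  have "orthonormal k (axis_frame (axis i 1) g)"
    by (rule axis_frame_orthonormal[OF g]) (auto simp: cinner_axis_left axis_comp)
  then have "0 = (\<Sum>a<k. cinner (axis_frame (axis i 1) g a) (W *v axis_frame (axis i 1) g a))"
    using W0 by (simp add: trace_proj_onto)
  also have "\<dots> = W $ i $ i + (\<Sum>m<k-1. W $ g m $ g m)"
    unfolding sum_axis_frame[OF k1, where F="\<lambda>y. cinner y (W *v y)"]
    by (simp add: cinner_axis_left matrix_vector_axis)
  also have "\<dots> = W $ i $ i + (\<Sum>m<k-1. W $ i $ i)"
    by (intro arg_cong2[where f="(+)"] refl sum.cong diag)
  also have "\<dots> = of_nat k * W $ i $ i"
    using k1 by (simp add: of_nat_diff algebra_simps)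
  finally have Wii: "W $ i $ i = 0" using k1 by simp
  show ?thesis
    unfolding vec_eq_iff
  proof (intro allI)
    fix a b :: 'n
    show "W $ a $ b = 0 $ a $ b"
      using diag[of a] Wii rayleigh_vanishing_offdiag[OF WH W0 k1 kn, of a b]
      by (cases "a = b") simp_all
  qed
qed

lemma wk_eq_0_imp_zero:
  fixes W :: "complex^'n^'n"
  assumes "W \<in> Herm" "wk k W = 0" "1 \<le> k" "k < CARD('n)"
  shows "W = 0"
proof (rule rayleigh_vanishing_imp_zero[OF assms(1) _ assms(3,4)])
  fix u :: "nat \<Rightarrow> complex^'n" assume "orthonormal k u"
  then show "trace (W ** proj_onto k u) = 0"
    using wk_ge[OF proj_onto_is_proj, of k u W] assms(2) by simp
qed

section \<open>Matrices in \<open>S(P)\<close> are block diagonal\<close>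

definition herm_part :: "complex^'n^'n \<Rightarrow> complex^'n^'n" where
  "herm_part M = (1/2) *\<^sub>R (M + cadj M)"

lemma herm_part_add: "herm_part (M + N) = herm_part M + herm_part N"
  by (simp add: herm_part_def cadj_add algebra_simps)

lemma herm_part_scaleR: "herm_part (c *\<^sub>R M) = c *\<^sub>R herm_part M"
  by (simp add: herm_part_def cadj_scaleR algebra_simps)

lemma herm_part_uminus: "herm_part (- M) = - herm_part M"
  by (simp add: herm_part_def cadj_def vec_eq_iff algebra_simps)

lemma herm_part_sum: "herm_part (sum f S) = (\<Sum>a\<in>S. herm_part (f a))"
  by (induct S rule: infinite_finite_induct)
    (auto simp: herm_part_add, simp_all add: herm_part_def cadj_def vec_eq_iff)

lemma herm_part_cadj: "herm_part (cadj M) = herm_part M"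
  by (simp add: herm_part_def algebra_simps)

lemma herm_part_herm: "X \<in> Herm \<Longrightarrow> herm_part X = X"
  by (simp add: herm_part_def Herm_def scaleR_2[symmetric])

text \<open>A real spanning set for the Hermitian matrices supported on the span of the frame \<open>u\<close>.\<close>

definition herm_gens :: "nat \<Rightarrow> (nat \<Rightarrow> complex^'n) \<Rightarrow> (complex^'n^'n) set" where
  "herm_gens m u = (\<lambda>(a,b). if a \<le> b then herm_part (outer (u a) (u b))
                            else herm_part (outer (\<i> *s u a) (u b))) ` ({..<m} \<times> {..<m})"

lemma finite_herm_gens: "finite (herm_gens m u)"
  by (simp add: herm_gens_def)

lemma card_herm_gens: "card (herm_gens m u) \<le> m^2"
proof -
  have "card (herm_gens m u) \<le> card ({..<m} \<times> {..<m})"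
    unfolding herm_gens_def by (rule card_image_le) simp
  then show ?thesis by (simp add: power2_eq_square)
qed

lemma herm_part_outer_swap: "herm_part (outer x y) = herm_part (outer y x)"
  by (metis herm_part_cadj cadj_outer)

lemma herm_part_outer_in_span:
  assumes "a < m" "b < m" shows "herm_part (outer (u a) (u b)) \<in> span (herm_gens m u)"
proof (cases "a \<le> b")
  case True
  then have "herm_part (outer (u a) (u b)) \<in> herm_gens m u" using assms unfolding herm_gens_def
    by (intro image_eqI[where x="(a,b)"]) auto
  then show ?thesis by (rule span_base)
next
  case False
  then have "herm_part (outer (u b) (u a)) \<in> herm_gens m u" using assms unfolding herm_gens_def
    by (intro image_eqI[where x="(b,a)"]) auto
  then show ?thesis by (simp add: herm_part_outer_swap span_base)
qed

lemma herm_part_i_outer_in_span: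
  assumes "a < m" "b < m" shows "herm_part (outer (\<i> *s u a) (u b)) \<in> span (herm_gens m u)"
proof -
  have "outer (u b) (\<i> *s u a) = (-1) *\<^sub>R outer (\<i> *s u b) (u a)"
    by (simp add: outer_smult_right vec_eq_iff outer_def)
  then have swap: "herm_part (outer (\<i> *s u a) (u b)) = - herm_part (outer (\<i> *s u b) (u a))"
    by (metis herm_part_outer_swap herm_part_uminus scaleR_minus1_left)
  consider "a > b" | "a < b" | "a = b" by linarith
  then show ?thesis
  proof cases
    case 1
    then have "herm_part (outer (\<i> *s u a) (u b)) \<in> herm_gens m u" using assms
      unfolding herm_gens_def by (intro image_eqI[where x="(a,b)"]) auto
    then show ?thesis by (rule span_base)
  next
    case 2
    then have "herm_part (outer (\<i> *s u b) (u a)) \<in> herm_gens m u" using assms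
      unfolding herm_gens_def by (intro image_eqI[where x="(b,a)"]) auto
    then show ?thesis unfolding swap by (intro span_neg span_base)
  next
    case 3
    then have "(2::real) *\<^sub>R herm_part (outer (\<i> *s u a) (u b)) = 0"
      using swap by (metis scaleR_2 eq_neg_iff_add_eq_0)
    then have "herm_part (outer (\<i> *s u a) (u b)) = 0" by simp
    then show ?thesis by (simp add: span_zero)
  qed
qed

lemma herm_part_compress_in_span:
  "herm_part (proj_onto m u ** X ** proj_onto m u) \<in> span (herm_gens m u)"
proof -
  have "proj_onto m u ** X ** proj_onto m u = (\<Sum>b<m. (proj_onto m u ** X) ** outer (u b) (u b))"
    by (simp add: proj_onto_def[of m u] matrix_mult_sum_right)
  also have "\<dots> = (\<Sum>b<m. \<Sum>a<m. outer (cinner (u a) (X *v u b) *s u a) (u b))"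
    by (simp add: mult_outer matrix_vector_mul_assoc[symmetric] proj_onto_mult_vec outer_sum_left)
  finally have "herm_part (proj_onto m u ** X ** proj_onto m u) =
      (\<Sum>b<m. \<Sum>a<m. herm_part (outer (cinner (u a) (X *v u b) *s u a) (u b)))"
    by (simp add: herm_part_sum)
  also have "\<dots> \<in> span (herm_gens m u)"
  proof (intro span_sum)
    fix a b assume ab: "b \<in> {..<m}" "a \<in> {..<m}"
    fix c :: complex
    have "c *s u a = Re c *\<^sub>R u a + Im c *\<^sub>R (\<i> *s u a)"
      by (simp add: vec_eq_iff complex_eq_iff algebra_simps)
    then have "herm_part (outer (c *s u a) (u b)) =
        Re c *\<^sub>R herm_part (outer (u a) (u b)) + Im c *\<^sub>R herm_part (outer (\<i> *s u a) (u b))"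
      by (simp add: outer_add_left outer_scaleR_left herm_part_add herm_part_scaleR)
    also have "\<dots> \<in> span (herm_gens m u)"
      using ab by (intro span_add span_scale herm_part_outer_in_span herm_part_i_outer_in_span) auto
    finally show "herm_part (outer (c *s u a) (u b)) \<in> span (herm_gens m u)" .
  qed
  finally show ?thesis .
qed

lemma SH_trace_maximal:
  assumes "X \<in> SH k P" "is_proj k Q" shows "Re (trace (X ** Q)) \<le> Re (trace (X ** P))"
  using complex_Re_le_cmod[of "trace (X ** Q)"] wk_ge[OF assms(2), of X] assms(1)
  by (simp add: SH_def)

lemma SH_offdiag_block_zero:
  fixes P X :: "complex^'n^'n"
  assumes P: "is_proj k P" "k \<le> CARD('n)" and X: "X \<in> SH k P"
  shows "P ** X ** (mat 1 - P) = 0"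
proof -
  obtain u where u: "orthonormal k u" and Pu: "P = proj_onto k u" using proj_obtain_frame[OF P(1)] .
  define m where "m = CARD('n) - k"
  obtain v where v: "orthonormal m v" and P'v: "mat 1 - P = proj_onto m v"
    using proj_obtain_frame[OF compl_is_proj[OF P]] unfolding m_def .
  have XH: "X \<in> Herm" using X by (simp add: SH_def)
  have Pv: "P *v v b = 0" if "b < m" for b
    using proj_onto_fix[OF v that] unfolding P'v[symmetric]
    by (simp add: matrix_vector_mult_diff_rdistrib)
  have uv: "cinner (u a) (v b) = 0" if "a < k" "b < m" for a b
    using cinner_adj[of "u a" P "v b"] Pv[OF that(2)] proj_onto_fix[OF u that(1)]
    by (simp add: Pu cadj_proj_onto)
  have "P *v (X *v v b) = 0" if "b < m" for b
  proof -
    have "cinner (u a) (X *v v b) = 0" if "a < k" for a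
      using XH u that v \<open>b < m\<close> uv SH_trace_maximal[OF X proj_onto_is_proj] Pu
      by (intro maximal_frame_cross_zero) (auto simp: orthonormal_def)
    then show ?thesis unfolding Pu proj_onto_mult_vec by simp
  qed
  then have "(\<Sum>b<m. outer (P *v (X *v v b)) (v b)) = 0"
    by (simp add: outer_def vec_eq_iff)
  moreover have "P ** X ** proj_onto m v = (\<Sum>b<m. outer (P *v (X *v v b)) (v b))"
    by (simp add: proj_onto_def[of m v] matrix_mult_sum_right mult_outer matrix_vector_mul_assoc)
  ultimately show ?thesis by (simp add: P'v)
qed

lemma herm_block_diagonal:
  fixes P X :: "complex^'n^'n"
  assumes P: "cadj P = P" and X: "X \<in> Herm" and off: "P ** X ** (mat 1 - P) = 0"
  shows "X = P ** X ** P + (mat 1 - P) ** X ** (mat 1 - P)"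
proof -
  define P' where "P' = mat 1 - P"
  have "P' ** X ** P = cadj (P ** X ** P')"
    using P X by (simp add: P'_def cadj_mult cadj_diff matrix_mul_assoc Herm_def)
  then have off': "P' ** X ** P = 0" using off by (simp add: P'_def cadj_def vec_eq_iff)
  have "X = (P + P') ** X ** (P + P')" by (simp add: P'_def)
  also have "\<dots> = P ** X ** P + P ** X ** P' + (P' ** X ** P + P' ** X ** P')"
    by (simp add: matrix_add_rdistrib matrix_add_ldistrib)
  finally show ?thesis using off off' by (simp add: P'_def)
qed

lemma dim_SH_le:
  fixes P :: "complex^'n^'n"
  assumes P: "is_proj k P" "k \<le> CARD('n)"
  shows "dim (SH k P) \<le> k^2 + (CARD('n) - k)^2"
proof -
  obtain u where "orthonormal k u" and Pu: "P = proj_onto k u" using proj_obtain_frame[OF P(1)] .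
  define m where "m = CARD('n) - k"
  obtain v where P'v: "mat 1 - P = proj_onto m v"
    using proj_obtain_frame[OF compl_is_proj[OF P]] unfolding m_def .
  have "X \<in> span (herm_gens k u \<union> herm_gens m v)" if X: "X \<in> SH k P" for X
  proof -
    have XH: "X \<in> Herm" using X by (simp add: SH_def)
    have "X = herm_part (P ** X ** P) + herm_part ((mat 1 - P) ** X ** (mat 1 - P))"
      using herm_block_diagonal[OF _ XH SH_offdiag_block_zero[OF P X]] P(1) herm_part_herm[OF XH]
      by (metis herm_part_add is_proj_def)
    also have "\<dots> \<in> span (herm_gens k u \<union> herm_gens m v)"
    proof (rule span_add)
      show "herm_part (P ** X ** P) \<in> span (herm_gens k u \<union> herm_gens m v)"
        using herm_part_compress_in_span[of k u X] span_mono[of "herm_gens k u"] Pu by auto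
      show "herm_part ((mat 1 - P) ** X ** (mat 1 - P)) \<in> span (herm_gens k u \<union> herm_gens m v)"
        using herm_part_compress_in_span[of m v X] span_mono[of "herm_gens m v"] P'v by auto
    qed
    finally show ?thesis .
  qed
  then have "dim (SH k P) \<le> card (herm_gens k u \<union> herm_gens m v)"
    by (intro dim_le_card) (auto simp: finite_herm_gens)
  also have "\<dots> \<le> k^2 + m^2"
    using card_Un_le[of "herm_gens k u" "herm_gens m v"] card_herm_gens[of k u] card_herm_gens[of m v]
    by linarith
  finally show ?thesis by (simp add: m_def)
qed

section \<open>Parallelism to \<open>A\<close> and the cone argument\<close>

lemma convex_cone_linear_nonneg:
  fixes f :: "'a::real_vector \<Rightarrow> real"
  assumes cone: "convex_cone_set C" and f: "linear f"
    and A: "A \<in> C" "f A > 0"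
    and definite: "\<And>X. X \<in> C \<Longrightarrow> f X = 0 \<Longrightarrow> X = 0"
    and dim: "dim C \<ge> 2" and X: "X \<in> C"
  shows "f X \<ge> 0"
proof (rule ccontr)
  assume "\<not> f X \<ge> 0"
  then have fX: "f X < 0" by simp
  have comb: "a *\<^sub>R Y + b *\<^sub>R Z \<in> C" if "Y \<in> C" "Z \<in> C" "a \<ge> 0" "b \<ge> 0" for a b Y Z
    using cone that unfolding convex_cone_set_def by blast
  have flin: "f (a *\<^sub>R Y + b *\<^sub>R Z) = a * f Y + b * f Z" for a b Y Z
    using f by (simp add: linear_add linear_scale)
  define t where "t = f A / (- f X)"
  have t: "t > 0" unfolding t_def using A(2) fX by (simp add: divide_pos_neg)
  have "f (1 *\<^sub>R A + t *\<^sub>R X) = 0" unfolding flin t_def using fX by simp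
  moreover have "1 *\<^sub>R A + t *\<^sub>R X \<in> C" using comb[OF A(1) X, of 1 t] t by simp
  ultimately have "1 *\<^sub>R A + t *\<^sub>R X = 0" using definite by blast
  then have "- A = 0 *\<^sub>R X + t *\<^sub>R X" by (simp add: neg_eq_iff_add_eq_0)
  then have mA: "- A \<in> C" using comb[OF X X, of 0 t] t by (simp only:)
  have "C \<subseteq> span {A}"
  proof
    fix Z assume Z: "Z \<in> C"
    define s where "s = f Z / f A"
    have "1 *\<^sub>R Z + (- s) *\<^sub>R A \<in> C"
      using comb[OF Z mA, of 1 s] comb[OF Z A(1), of 1 "- s"] by (cases "s \<ge> 0") auto
    moreover have "f (1 *\<^sub>R Z + (- s) *\<^sub>R A) = 0" unfolding flin s_def using A(2) by simp
    ultimately have "1 *\<^sub>R Z + (- s) *\<^sub>R A = 0" using definite by blast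
    then have "Z = s *\<^sub>R A" by (simp add: algebra_simps)
    then show "Z \<in> span {A}" by (simp add: span_scale span_base)
  qed
  then have "dim C \<le> 1" using dim_le_card[of C "{A}"] by simp
  then show False using dim by simp
qed

lemma par_unique_maximiser:
  fixes A P X :: "complex^'n^'n"
  assumes P: "is_proj k P"
    and uniq: "\<forall>Q. is_proj k Q \<and> cmod (trace (A ** Q)) = wk k A \<longrightarrow> Q = P"
    and par: "par k X A"
  shows "cmod (trace (X ** P)) = wk k X"
proof -
  obtain \<mu> :: real where \<mu>: "\<mu> \<in> {1, -1}" and eq: "wk k (X + \<mu> *\<^sub>R A) = wk k X + wk k A"
    using par unfolding par_def by blast
  obtain Q where Q: "is_proj k Q" "cmod (trace ((X + \<mu> *\<^sub>R A) ** Q)) = wk k (X + \<mu> *\<^sub>R A)"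
    using wk_attained[OF P] by blast
  have "trace ((X + \<mu> *\<^sub>R A) ** Q) = trace (X ** Q) + complex_of_real \<mu> * trace (A ** Q)"
    by (simp add: matrix_add_rdistrib trace_add scalar_matrix_assoc[symmetric] trace_scaleR)
  then have "cmod (trace ((X + \<mu> *\<^sub>R A) ** Q)) \<le> cmod (trace (X ** Q)) + cmod (trace (A ** Q))"
    using \<mu> by (auto intro: order_trans[OF norm_triangle_ineq] simp: norm_mult)
  moreover have "cmod (trace (X ** Q)) \<le> wk k X" "cmod (trace (A ** Q)) \<le> wk k A"
    using wk_ge[OF Q(1)] by auto
  ultimately have "cmod (trace (A ** Q)) = wk k A" "cmod (trace (X ** Q)) = wk k X"
    using Q(2) eq by linarith+
  moreover have "Q = P" using uniq Q(1) calculation(1) by blast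
  ultimately show ?thesis by simp
qed

lemma wk_pos_if_unique_maximiser:
  fixes A P :: "complex^'n^'n"
  assumes "1 \<le> k" "k < CARD('n)" "is_proj k P"
    and uniq: "\<forall>Q. is_proj k Q \<and> cmod (trace (A ** Q)) = wk k A \<longrightarrow> Q = P"
  shows "wk k A > 0"
proof (rule ccontr)
  assume "\<not> wk k A > 0"
  then have "wk k A = 0" using wk_nonneg[OF assms(3), of A] by linarith
  then have "is_proj k Q \<Longrightarrow> Q = P" for Q using uniq wk_ge[of k Q A] by auto
  moreover obtain Q1 Q2 :: "complex^'n^'n" where "is_proj k Q1" "is_proj k Q2" "Q1 \<noteq> Q2"
    using exists_distinct_proj[OF assms(1,2)] by blast
  ultimately show False by blast
qed

theorem mainTheorem12:
  fixes A P :: "complex^'n^'n" and k :: nat and C :: "(complex^'n^'n) set"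
  assumes "1 \<le> k" and "k < CARD('n)"
    and "A \<in> Herm"
    and "is_proj k P" and "cmod (trace (A ** P)) = wk k A"
    and "\<forall>Q. is_proj k Q \<and> cmod (trace (A ** Q)) = wk k A \<longrightarrow> Q = P"
    and "trace (A ** P) = complex_of_real (wk k A)"
    and "convex_cone_set C"
    and "dim C \<ge> k^2 + (CARD('n) - k)^2"
    and "A \<in> C" and "C \<subseteq> PH k A"
  shows "C \<subseteq> SH k P \<and> dim C = k^2 + (CARD('n) - k)^2"
proof -
  have CH: "C \<subseteq> Herm" and Cpar: "\<And>X. X \<in> C \<Longrightarrow> par k X A" using assms(11) by (auto simp: PH_def)
  define f where "f X = Re (trace (X ** P))" for X
  have trace_f: "trace (X ** P) = complex_of_real (f X)" if "X \<in> C" for X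
    unfolding f_def using trace_herm_mult_real[of X P] CH that assms(4) by (auto simp: is_proj_def)
  have abs_f: "\<bar>f X\<bar> = wk k X" if "X \<in> C" for X
    using par_unique_maximiser[OF assms(4,6) Cpar[OF that]] trace_f[OF that] by simp
  have "linear f"
    by (rule linearI) (simp_all add: f_def matrix_add_rdistrib trace_add scalar_matrix_assoc[symmetric]
        trace_scaleR)
  moreover have "f A > 0" using wk_pos_if_unique_maximiser[OF assms(1,2,4,6)] assms(7)
    by (simp add: f_def)
  moreover have "X = 0" if "X \<in> C" "f X = 0" for X
    using wk_eq_0_imp_zero[of X k] abs_f[of X] CH that assms(1,2) by auto
  moreover have "dim C \<ge> 2"
    using assms(9) one_le_power[of k 2] one_le_power[of "CARD('n) - k" 2] assms(1,2) by linarith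
  ultimately have "f X \<ge> 0" if "X \<in> C" for X
    using convex_cone_linear_nonneg[OF assms(8) _ assms(10)] that by blast
  then have "C \<subseteq> SH k P" using CH abs_f trace_f by (auto simp: SH_def)
  moreover have "dim C \<le> k^2 + (CARD('n) - k)^2"
    using dim_subset[OF calculation] dim_SH_le[OF assms(4)] assms(2) by fastforce
  ultimately show ?thesis using assms(9) by simp
qed

end
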